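(* Let $S$ be a finite set, $R$ a commutative ring with $1$, $q\in R$, and $\mathfrak M\subseteq 2^S$ an arbitrary set system. Then the ideal $I_q(\mathfrak M)$ of $A=R\langle t_s\mid s\in S\rangle$, and hence the algebra $D_q(\mathfrak M)=A/I_q(\mathfrak M)$, does not depend on the choice of the total order on $S$ used to define it.
   Context: Given a total order $<$ on $S$: for $J=\{j_1<\dots<j_{\#J}\}\subseteq S$, $t_J=t_{j_1}\cdots t_{j_{\#J}}$; for $I=\{j_{\alpha_1}<\dots<j_{\alpha_{\#I}}\}\subseteq J$, $\ell_J(I)=\sum_{\nu}(\alpha_\nu-\nu)$; $\tau^-_J=\sum_{I\subseteq J,\ \#I\text{ odd}}(-1)^{\ell_J(I)}(-q)^{(\#I-1)/2}t_{J\setminus I}$. $I_q(\mathfrak M)$ is the two-sided ideal of $A$ generated by $t_s^2-q$ ($s\in S$), $t_rt_s+t_st_r-2q$ ($r,s\in S$, $s<r$), and $\tau^-_J$ ($J\in\mathfrak M$); all of $t_J$, $\ell_J$, $\tau^-_J$ depend on the order. *)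

theory Defs
  imports Main "HOL-Library.Function_Algebras"
begin

text \<open>The free associative algebra \<open>A = R<t_s | s in S>\<close>: elements are finitely supported
  functions from words over \<open>S\<close> (lists) to \<open>R\<close>; the word \<open>[s1,...,sk]\<close> stands for the
  monomial \<open>t_s1 ... t_sk\<close>.\<close>

definition ncA :: "'s set \<Rightarrow> ('s list \<Rightarrow> 'r::comm_ring_1) set" where
  "ncA S = {f. finite {w. f w \<noteq> 0} \<and> (\<forall>w. f w \<noteq> 0 \<longrightarrow> set w \<subseteq> S)}"

definition ncmono :: "'s list \<Rightarrow> 's list \<Rightarrow> 'r::comm_ring_1" where
  "ncmono w = (\<lambda>u. if u = w then 1 else 0)"

definition ncconst :: "'r::comm_ring_1 \<Rightarrow> 's list \<Rightarrow> 'r" where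
  "ncconst c = (\<lambda>u. if u = [] then c else 0)"

definition ncsmult :: "'r::comm_ring_1 \<Rightarrow> ('s list \<Rightarrow> 'r) \<Rightarrow> 's list \<Rightarrow> 'r" where
  "ncsmult c f = (\<lambda>u. c * f u)"

definition ncmult :: "('s list \<Rightarrow> 'r::comm_ring_1) \<Rightarrow> ('s list \<Rightarrow> 'r) \<Rightarrow> 's list \<Rightarrow> 'r" where
  "ncmult f g = (\<lambda>w. \<Sum>i\<le>length w. f (take i w) * g (drop i w))"

inductive_set nc_ideal :: "'s set \<Rightarrow> ('s list \<Rightarrow> 'r::comm_ring_1) set \<Rightarrow> ('s list \<Rightarrow> 'r) set"
  for S :: "'s set" and G :: "('s list \<Rightarrow> 'r) set" where
  gen: "g \<in> G \<Longrightarrow> g \<in> nc_ideal S G"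
| zero: "0 \<in> nc_ideal S G"
| add: "f \<in> nc_ideal S G \<Longrightarrow> g \<in> nc_ideal S G \<Longrightarrow> f + g \<in> nc_ideal S G"
| mult_left: "a \<in> ncA S \<Longrightarrow> f \<in> nc_ideal S G \<Longrightarrow> ncmult a f \<in> nc_ideal S G"
| mult_right: "a \<in> ncA S \<Longrightarrow> f \<in> nc_ideal S G \<Longrightarrow> ncmult f a \<in> nc_ideal S G"

definition ord_less :: "('s \<times> 's) set \<Rightarrow> 's \<Rightarrow> 's \<Rightarrow> bool" where
  "ord_less ord a b \<longleftrightarrow> (a, b) \<in> ord \<and> a \<noteq> b"

definition ordlist :: "('s \<times> 's) set \<Rightarrow> 's set \<Rightarrow> 's list" where
  "ordlist ord J = (THE xs. set xs = J \<and> sorted_wrt (ord_less ord) xs)"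

definition tJ :: "('s \<times> 's) set \<Rightarrow> 's set \<Rightarrow> 's list \<Rightarrow> 'r::comm_ring_1" where
  "tJ ord J = ncmono (ordlist ord J)"

text \<open>0-based position of an element in a list.\<close>
definition pos :: "'s list \<Rightarrow> 's \<Rightarrow> nat" where
  "pos xs a = length (takeWhile (\<lambda>x. x \<noteq> a) xs)"

text \<open>\<open>l_J(I) = sum_nu (alpha_nu - nu)\<close>, where \<open>I = {j_alpha_1 < ... < j_alpha_#I}\<close>
  (computed with 0-based indices, which gives the same differences).\<close>
definition ellJ :: "('s \<times> 's) set \<Rightarrow> 's set \<Rightarrow> 's set \<Rightarrow> nat" where
  "ellJ ord J I = (let js = ordlist ord J; is = ordlist ord I in
      \<Sum>\<nu><length is. pos js (is ! \<nu>) - \<nu>)"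

definition tau_minus :: "('s \<times> 's) set \<Rightarrow> 'r::comm_ring_1 \<Rightarrow> 's set \<Rightarrow> 's list \<Rightarrow> 'r" where
  "tau_minus ord q J = (\<Sum>I\<in>{I. I \<subseteq> J \<and> odd (card I)}.
      ncsmult ((-1) ^ ellJ ord J I * (- q) ^ ((card I - 1) div 2)) (tJ ord (J - I)))"

definition Iq_gens :: "'s set \<Rightarrow> ('s \<times> 's) set \<Rightarrow> 'r::comm_ring_1 \<Rightarrow> 's set set \<Rightarrow> ('s list \<Rightarrow> 'r) set" where
  "Iq_gens S ord q M =
     {ncmono [s, s] - ncconst q | s. s \<in> S}
   \<union> {ncmono [r, s] + ncmono [s, r] - ncconst (2 * q) | r s. r \<in> S \<and> s \<in> S \<and> ord_less ord s r}
   \<union> {tau_minus ord q J | J. J \<in> M}"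

definition Iq :: "'s set \<Rightarrow> ('s \<times> 's) set \<Rightarrow> 'r::comm_ring_1 \<Rightarrow> 's set set \<Rightarrow> ('s list \<Rightarrow> 'r) set" where
  "Iq S ord q M = nc_ideal S (Iq_gens S ord q M)"

end

theory Submission
  imports Defs
begin

text \<open>A total order enters \<open>\<tau>\<^sup>-\<^sub>J\<close> only through the increasing enumeration of \<open>J\<close>, so consider
  \<open>\<tau>(xs)\<close> (\<open>tau_list\<close>) for an arbitrary enumeration \<open>xs\<close> of \<open>J\<close>. Exchanging two adjacent letters
  \<open>a, b\<close> of \<open>xs\<close> turns \<open>\<tau>(xs)\<close> into \<open>-\<tau>(xs)\<close> modulo the anticommutation relations
  \<open>t\<^sub>a t\<^sub>b + t\<^sub>b t\<^sub>a = 2q\<close>: a term removing exactly one of \<open>a, b\<close> keeps its monomial while \<open>\<ell>\<close>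
  changes by one, and the terms for \<open>I\<close> and \<open>I \<union> {a, b}\<close> (whose \<open>\<ell>\<close> have the same parity and
  whose coefficients differ by \<open>-q\<close>) add up to a multiple of \<open>u (t\<^sub>a t\<^sub>b + t\<^sub>b t\<^sub>a - 2q) v\<close>.
  The anticommutation relations are symmetric in \<open>a, b\<close> and hence independent of the order, so
  membership of \<open>\<tau>(xs)\<close> in the ideal does not depend on the enumeration, and every generator
  for one order lies in the ideal for the other.\<close>

abbreviation anticomm_rel :: "'r::comm_ring_1 \<Rightarrow> 's \<Rightarrow> 's \<Rightarrow> 's list \<Rightarrow> 'r" where
  "anticomm_rel q r s \<equiv> ncmono [r, s] + ncmono [s, r] - ncconst (2 * q)"

subsection \<open>The free algebra\<close>

lemma ncmult_add_left: "ncmult (f + g) h = ncmult f h + ncmult g h"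
  by (rule ext) (simp add: ncmult_def sum.distrib algebra_simps)

lemma ncmult_add_right: "ncmult f (g + h) = ncmult f g + ncmult f h"
  by (rule ext) (simp add: ncmult_def sum.distrib algebra_simps)

lemma ncmult_diff_left: "ncmult (f - g) h = ncmult f h - ncmult g h"
  by (rule ext) (simp add: ncmult_def sum_subtractf algebra_simps)

lemma ncmult_diff_right: "ncmult f (g - h) = ncmult f g - ncmult f h"
  by (rule ext) (simp add: ncmult_def sum_subtractf algebra_simps)

lemma ncmult_ncsmult_left: "ncmult (ncsmult c f) h = ncsmult c (ncmult f h)"
  by (rule ext) (simp add: ncmult_def ncsmult_def sum_distrib_left algebra_simps)

lemma ncmult_ncsmult_right: "ncmult f (ncsmult c h) = ncsmult c (ncmult f h)"
  by (rule ext) (simp add: ncmult_def ncsmult_def sum_distrib_left algebra_simps)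

lemma ncconst_eq_ncsmult: "ncconst c = ncsmult c (ncmono [])"
  by (rule ext) (simp add: ncsmult_def ncconst_def ncmono_def)

lemma ncmult_ncmono: "ncmult (ncmono u) (ncmono v) = (ncmono (u @ v) :: 's list \<Rightarrow> 'r::comm_ring_1)"
proof (rule ext)
  fix w :: "'s list"
  have split: "(take i w = u \<and> drop i w = v) \<longleftrightarrow> (w = u @ v \<and> i = length u)"
    if "i \<le> length w" for i
    using that by (metis append_eq_conv_conj append_take_drop_id length_take min_absorb2)
  have "ncmult (ncmono u) (ncmono v) w
      = (\<Sum>i\<le>length w. if w = u @ v \<and> i = length u then 1 else 0)"
    unfolding ncmult_def ncmono_def by (rule sum.cong) (auto simp: split)
  also have "\<dots> = ncmono (u @ v) w"
    by (auto simp: ncmono_def)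
  finally show "ncmult (ncmono u) (ncmono v) w = ncmono (u @ v) w" .
qed

lemma ncmult_ncconst: "ncmult (ncconst c) f = (ncsmult c f :: 's list \<Rightarrow> 'r::comm_ring_1)"
proof (rule ext)
  fix w :: "'s list"
  have "ncmult (ncconst c) f w = (\<Sum>i\<in>{0}. ncconst c (take i w) * f (drop i w))"
    unfolding ncmult_def by (rule sum.mono_neutral_right) (auto simp: ncconst_def)
  then show "ncmult (ncconst c) f w = ncsmult c f w"
    by (simp add: ncconst_def ncsmult_def)
qed

lemma ncmono_in_ncA: "set u \<subseteq> S \<Longrightarrow> ncmono u \<in> ncA S"
  by (auto simp: ncA_def ncmono_def)

lemma ncconst_in_ncA: "ncconst c \<in> ncA S"
  by (auto simp: ncA_def ncconst_def)

lemma nc_ideal_ncsmult: "f \<in> nc_ideal S G \<Longrightarrow> ncsmult c f \<in> nc_ideal S G"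
  by (metis ncmult_ncconst ncconst_in_ncA nc_ideal.mult_left)

lemma nc_ideal_uminus: "f \<in> nc_ideal S G \<Longrightarrow> - f \<in> nc_ideal S G"
  using nc_ideal_ncsmult[of f S G "-1"] by (simp add: ncsmult_def fun_Compl_def)

lemma nc_ideal_diff: "f \<in> nc_ideal S G \<Longrightarrow> g \<in> nc_ideal S G \<Longrightarrow> f - g \<in> nc_ideal S G"
  by (metis diff_conv_add_uminus nc_ideal_uminus nc_ideal.add)

lemma nc_ideal_add_iff:
  assumes "f + g \<in> nc_ideal S G"
  shows "f \<in> nc_ideal S G \<longleftrightarrow> g \<in> nc_ideal S G"
  by (metis assms add_diff_cancel_left' add_diff_cancel_right' nc_ideal_diff)

lemma nc_ideal_sum:
  "finite A \<Longrightarrow> (\<And>x. x \<in> A \<Longrightarrow> h x \<in> nc_ideal S G) \<Longrightarrow> sum h A \<in> nc_ideal S G"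
  by (induction A rule: finite_induct) (auto intro: nc_ideal.zero nc_ideal.add)

lemma nc_ideal_subset:
  assumes "G \<subseteq> nc_ideal S H"
  shows "nc_ideal S G \<subseteq> nc_ideal S H"
proof
  fix f assume "f \<in> nc_ideal S G"
  then show "f \<in> nc_ideal S H"
    by induction (use assms in \<open>blast intro: nc_ideal.intros\<close>)+
qed

lemma anticomm_rel_sandwich_in_nc_ideal:
  assumes "anticomm_rel q a b \<in> G" "set u \<subseteq> S" "set v \<subseteq> S"
  shows "ncmono (u @ [a, b] @ v) + ncmono (u @ [b, a] @ v) - ncsmult (2 * q) (ncmono (u @ v))
    \<in> nc_ideal S G"
proof -
  have "ncmult (ncmono u) (ncmult (anticomm_rel q a b) (ncmono v)) \<in> nc_ideal S G"
    by (intro nc_ideal.mult_left nc_ideal.mult_right nc_ideal.gen ncmono_in_ncA assms)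
  then show ?thesis
    by (simp add: ncmult_add_left ncmult_add_right ncmult_diff_left ncmult_diff_right
        ncconst_eq_ncsmult ncmult_ncsmult_left ncmult_ncsmult_right ncmult_ncmono)
qed

subsection \<open>Sorted enumerations\<close>

lemma ord_less_trans:
  "linear_order_on S ord \<Longrightarrow> ord_less ord a b \<Longrightarrow> ord_less ord b c \<Longrightarrow> ord_less ord a c"
  unfolding linear_order_on_def partial_order_on_def preorder_on_def ord_less_def antisym_def
    trans_def
  by blast

lemma ord_less_asym: "linear_order_on S ord \<Longrightarrow> ord_less ord a b \<Longrightarrow> \<not> ord_less ord b a"
  unfolding linear_order_on_def partial_order_on_def preorder_on_def ord_less_def antisym_def
  by blast

lemma ord_less_total:
  "linear_order_on S ord \<Longrightarrow> a \<in> S \<Longrightarrow> b \<in> S \<Longrightarrow> a \<noteq> b \<Longrightarrow> ord_less ord a b \<or> ord_less ord b a"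
  unfolding linear_order_on_def total_on_def ord_less_def by blast

lemma sorted_wrt_insert_exists:
  assumes trans: "\<And>a b c. P a b \<Longrightarrow> P b c \<Longrightarrow> P a c"
    and "sorted_wrt P xs" "\<forall>y\<in>set xs. y \<noteq> x \<longrightarrow> P x y \<or> P y x"
  shows "\<exists>ys. set ys = insert x (set xs) \<and> sorted_wrt P ys"
  using assms(2,3)
proof (induction xs)
  case Nil
  show ?case by (intro exI[of _ "[x]"]) simp
next
  case (Cons y xs)
  consider "x = y" | "P x y" | "P y x"
    using Cons.prems by auto
  then show ?case
  proof cases
    case 1
    then show ?thesis using Cons.prems by (intro exI[of _ "y # xs"]) auto
  next
    case 2
    then show ?thesis using Cons.prems trans by (intro exI[of _ "x # y # xs"]) auto
  next
    case 3
    obtain ys where "set ys = insert x (set xs)" "sorted_wrt P ys"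
      using Cons by auto
    then show ?thesis using 3 Cons.prems by (intro exI[of _ "y # ys"]) auto
  qed
qed

lemma sorted_wrt_unique:
  assumes asym: "\<And>a b. P a b \<Longrightarrow> \<not> P b a"
  shows "sorted_wrt P xs \<Longrightarrow> sorted_wrt P ys \<Longrightarrow> set xs = set ys \<Longrightarrow> xs = ys"
proof (induction xs arbitrary: ys)
  case (Cons x xs)
  then obtain y ys' where ys: "ys = y # ys'" by (cases ys) auto
  have "x = y"
  proof (rule ccontr)
    assume "x \<noteq> y"
    then have "P x y" "P y x"
      using Cons.prems ys by (auto simp: set_eq_iff)
    then show False using asym by blast
  qed
  moreover have "x \<notin> set xs" "y \<notin> set ys'"
    using Cons.prems ys asym by (metis sorted_wrt.simps(2))+
  ultimately have "set xs = set ys'"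
    using Cons.prems(3) ys by (simp add: insert_ident)
  then show ?case
    using Cons \<open>x = y\<close> ys by simp
qed simp

lemma sorted_wrt_distinct: "sorted_wrt P xs \<Longrightarrow> (\<And>a. \<not> P a a) \<Longrightarrow> distinct xs"
  by (induction xs) auto

lemma ordlist_sorted_wrt:
  assumes "linear_order_on S ord" "sorted_wrt (ord_less ord) xs"
  shows "ordlist ord (set xs) = xs"
  unfolding ordlist_def
proof (rule the_equality)
  fix ys assume "set ys = set xs \<and> sorted_wrt (ord_less ord) ys"
  then show "ys = xs"
    using sorted_wrt_unique[of "ord_less ord" ys xs] ord_less_asym[OF assms(1)] assms(2) by blast
qed (use assms in simp)

lemma sorted_wrt_ord_less_exists:
  assumes "linear_order_on S ord" "finite J" "J \<subseteq> S"
  shows "\<exists>xs. set xs = J \<and> sorted_wrt (ord_less ord) xs"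
  using assms(2,3)
proof (induction J rule: finite_induct)
  case (insert x F)
  then obtain xs where xs: "set xs = F" "sorted_wrt (ord_less ord) xs" by auto
  moreover have "\<forall>y\<in>set xs. y \<noteq> x \<longrightarrow> ord_less ord x y \<or> ord_less ord y x"
    using insert.prems xs ord_less_total[OF assms(1)] by auto
  ultimately show ?case
    using sorted_wrt_insert_exists[of "ord_less ord" xs x] ord_less_trans[OF assms(1)] by blast
qed simp

lemma set_sorted_distinct_ordlist:
  assumes "linear_order_on S ord" "finite J" "J \<subseteq> S"
  shows "set (ordlist ord J) = J" "sorted_wrt (ord_less ord) (ordlist ord J)"
    "distinct (ordlist ord J)"
proof -
  obtain xs where xs: "set xs = J" "sorted_wrt (ord_less ord) xs"
    using sorted_wrt_ord_less_exists[OF assms] by blast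
  moreover have "ordlist ord J = xs"
    using ordlist_sorted_wrt[OF assms(1) xs(2)] xs(1) by simp
  ultimately show "set (ordlist ord J) = J" "sorted_wrt (ord_less ord) (ordlist ord J)"
    "distinct (ordlist ord J)"
    by (auto intro: sorted_wrt_distinct simp: ord_less_def)
qed

lemma ordlist_subset:
  assumes "linear_order_on S ord" "finite J" "J \<subseteq> S"
  shows "ordlist ord (J \<inter> I) = filter (\<lambda>x. x \<in> I) (ordlist ord J)"
proof -
  have "ordlist ord (set (filter (\<lambda>x. x \<in> I) (ordlist ord J))) = filter (\<lambda>x. x \<in> I) (ordlist ord J)"
    using ordlist_sorted_wrt[OF assms(1)] set_sorted_distinct_ordlist[OF assms] sorted_wrt_filter
    by blast
  then show ?thesis
    using set_sorted_distinct_ordlist(1)[OF assms]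
    by (simp add: Int_commute Collect_conj_eq inter_set_filter)
qed

subsection \<open>The exponent \<open>\<ell>\<close> along a list\<close>

text \<open>For an enumeration \<open>xs\<close> of \<open>J\<close>, \<open>\<ell>\<^sub>J(I)\<close> counts the pairs of positions \<open>i < j\<close> of \<open>xs\<close>
  with \<open>xs ! i \<notin> I\<close> and \<open>xs ! j \<in> I\<close>.\<close>

fun ell_list :: "'s list \<Rightarrow> 's set \<Rightarrow> nat" where
  "ell_list [] I = 0"
| "ell_list (x # xs) I = (if x \<in> I then 0 else length (filter (\<lambda>y. y \<in> I) xs)) + ell_list xs I"

lemma ell_list_append:
  "ell_list (us @ vs) I = ell_list us I + ell_list vs I
     + length (filter (\<lambda>x. x \<notin> I) us) * length (filter (\<lambda>x. x \<in> I) vs)"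
  by (induction us) auto

lemma ell_list_cong:
  "(\<And>x. x \<in> set xs \<Longrightarrow> x \<in> I \<longleftrightarrow> x \<in> I') \<Longrightarrow> ell_list xs I = ell_list xs I'"
proof (induction xs)
  case (Cons x xs)
  have "filter (\<lambda>y. y \<in> I) xs = filter (\<lambda>y. y \<in> I') xs"
    using Cons.prems by (intro filter_cong) auto
  then show ?case using Cons by auto
qed simp

lemma pos_Cons: "pos (x # xs) a = (if x = a then 0 else Suc (pos xs a))"
  by (simp add: pos_def)

lemma pos_filter_nth_ge:
  "distinct xs \<Longrightarrow> \<nu> < length (filter P xs) \<Longrightarrow> \<nu> \<le> pos xs (filter P xs ! \<nu>)"
proof (induction xs arbitrary: \<nu>)
  case (Cons x xs)
  have x_notin: "filter P xs ! \<mu> \<noteq> x" if "\<mu> < length (filter P xs)" for \<mu>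
    using nth_mem[OF that] Cons.prems(1) by auto
  show ?case
  proof (cases "P x")
    case True
    then show ?thesis
      using Cons x_notin by (cases \<nu>) (auto simp: pos_Cons)
  next
    case False
    then have "\<nu> < length (filter P xs)"
      using Cons.prems by simp
    then have "\<nu> \<le> pos xs (filter P xs ! \<nu>)" "filter P xs ! \<nu> \<noteq> x"
      using Cons x_notin by simp_all
    then show ?thesis
      using False by (simp add: pos_Cons)
  qed
qed simp

lemma sum_pos_filter_eq_ell_list:
  assumes "distinct xs"
  shows "(\<Sum>\<nu><length (filter (\<lambda>x. x \<in> I) xs). pos xs (filter (\<lambda>x. x \<in> I) xs ! \<nu>) - \<nu>)
    = ell_list xs I"
  using assms
proof (induction xs)
  case (Cons x xs)
  let ?fs = "filter (\<lambda>x. x \<in> I) xs"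
  have pos_shift: "pos (x # xs) (?fs ! \<nu>) = Suc (pos xs (?fs ! \<nu>))" if "\<nu> < length ?fs" for \<nu>
    using nth_mem[OF that] Cons.prems by (auto simp: pos_Cons)
  show ?case
  proof (cases "x \<in> I")
    case True
    then have "(\<Sum>\<nu><length (filter (\<lambda>x. x \<in> I) (x # xs)).
          pos (x # xs) (filter (\<lambda>x. x \<in> I) (x # xs) ! \<nu>) - \<nu>)
        = (\<Sum>\<nu><Suc (length ?fs). pos (x # xs) ((x # ?fs) ! \<nu>) - \<nu>)"
      by simp
    also have "\<dots> = (\<Sum>\<nu><length ?fs. pos (x # xs) (?fs ! \<nu>) - Suc \<nu>)"
      by (subst sum.lessThan_Suc_shift) (simp add: pos_Cons)
    also have "\<dots> = (\<Sum>\<nu><length ?fs. pos xs (?fs ! \<nu>) - \<nu>)"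
      by (rule sum.cong) (auto simp: pos_shift)
    finally show ?thesis using True Cons by simp
  next
    case False
    have "pos (x # xs) (?fs ! \<nu>) - \<nu> = 1 + (pos xs (?fs ! \<nu>) - \<nu>)" if "\<nu> < length ?fs" for \<nu>
      using pos_shift[OF that] pos_filter_nth_ge[OF _ that] Cons.prems by simp
    then have "(\<Sum>\<nu><length ?fs. pos (x # xs) (?fs ! \<nu>) - \<nu>)
        = (\<Sum>\<nu><length ?fs. 1 + (pos xs (?fs ! \<nu>) - \<nu>))"
      by (intro sum.cong) auto
    also have "\<dots> = length ?fs + (\<Sum>\<nu><length ?fs. pos xs (?fs ! \<nu>) - \<nu>)"
      unfolding sum.distrib by simp
    finally show ?thesis using False Cons by simp
  qed
qed simp

lemma ellJ_eq_ell_list: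
  assumes "linear_order_on S ord" "finite J" "J \<subseteq> S" "I \<subseteq> J"
  shows "ellJ ord J I = ell_list (ordlist ord J) I"
proof -
  have "ordlist ord I = filter (\<lambda>x. x \<in> I) (ordlist ord J)"
    using ordlist_subset[OF assms(1-3), of I] assms(4) by (simp add: Int_absorb1)
  then show ?thesis
    using sum_pos_filter_eq_ell_list[OF set_sorted_distinct_ordlist(3)[OF assms(1-3)]]
    by (simp add: ellJ_def)
qed

subsection \<open>The elements \<open>\<tau>\<^sup>-\<close> along a list\<close>

definition tau_term :: "'r::comm_ring_1 \<Rightarrow> 's list \<Rightarrow> 's set \<Rightarrow> 's list \<Rightarrow> 'r" where
  "tau_term q xs I = ncsmult ((-1) ^ ell_list xs I * (- q) ^ ((card I - 1) div 2))
     (ncmono (filter (\<lambda>x. x \<notin> I) xs))"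

definition tau_list :: "'r::comm_ring_1 \<Rightarrow> 's list \<Rightarrow> 's list \<Rightarrow> 'r" where
  "tau_list q xs = (\<Sum>I | I \<subseteq> set xs \<and> odd (card I). tau_term q xs I)"

lemma tau_minus_eq_tau_list:
  assumes "linear_order_on S ord" "finite J" "J \<subseteq> S"
  shows "tau_minus ord q J = tau_list q (ordlist ord J)"
proof -
  have "ordlist ord (J - I) = filter (\<lambda>x. x \<notin> I) (ordlist ord J)" for I
    using ordlist_subset[OF assms, of "- I"] by (simp add: Diff_eq)
  then show ?thesis
    unfolding tau_minus_def tau_list_def set_sorted_distinct_ordlist(1)[OF assms]
    by (intro sum.cong) (auto simp: tau_term_def tJ_def ellJ_eq_ell_list[OF assms])
qed

lemma tau_term_swap_one_side:
  fixes q :: "'r::comm_ring_1"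
  assumes "a \<in> I \<longleftrightarrow> b \<notin> I"
  shows "tau_term q (us @ b # a # vs) I = - tau_term q (us @ a # b # vs) I"
proof -
  let ?xs = "us @ a # b # vs" and ?ys = "us @ b # a # vs"
  have "ell_list ?ys I = Suc (ell_list ?xs I) \<or> ell_list ?xs I = Suc (ell_list ?ys I)"
    using assms by (cases "a \<in> I") (simp_all add: ell_list_append)
  then have "(-1 :: 'r) ^ ell_list ?ys I = - ((-1) ^ ell_list ?xs I)"
    by auto
  moreover have "filter (\<lambda>x. x \<notin> I) ?ys = filter (\<lambda>x. x \<notin> I) ?xs"
    using assms by auto
  ultimately show ?thesis
    by (simp add: tau_term_def ncsmult_def fun_Compl_def)
qed

lemma tau_term_swap_pair:
  fixes q :: "'r::comm_ring_1"
  assumes "distinct (us @ a # b # vs)" "a \<notin> I" "b \<notin> I" "finite I" "odd (card I)"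
  defines "xs \<equiv> us @ a # b # vs" and "ys \<equiv> us @ b # a # vs"
    and "I' \<equiv> insert a (insert b I)"
    and "u \<equiv> filter (\<lambda>x. x \<notin> I) us" and "v \<equiv> filter (\<lambda>x. x \<notin> I) vs"
  shows "(tau_term q xs I + tau_term q ys I) + (tau_term q xs I' + tau_term q ys I')
    = ncsmult ((-1) ^ ell_list xs I * (- q) ^ ((card I - 1) div 2))
        (ncmono (u @ [a, b] @ v) + ncmono (u @ [b, a] @ v) - ncsmult (2 * q) (ncmono (u @ v)))"
proof -
  have ab: "a \<noteq> b" "a \<notin> set us" "b \<notin> set us" "a \<notin> set vs" "b \<notin> set vs"
    using assms(1) by auto
  have same_on: "filter (\<lambda>x. x \<in> I') zs = filter (\<lambda>x. x \<in> I) zs"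
    "filter (\<lambda>x. x \<notin> I') zs = filter (\<lambda>x. x \<notin> I) zs"
    "ell_list zs I' = ell_list zs I"
    if "a \<notin> set zs" "b \<notin> set zs" for zs
    using that by (auto simp: I'_def intro!: filter_cong ell_list_cong)
  have ell_ys: "ell_list ys I = ell_list xs I" "ell_list ys I' = ell_list xs I'"
    using assms(2,3) by (simp_all add: xs_def ys_def I'_def ell_list_append)
  have "a \<in> I'" "b \<in> I'"
    by (simp_all add: I'_def)
  then have "ell_list xs I + 2 * length u = ell_list xs I' + 2 * length (filter (\<lambda>x. x \<in> I) vs)"
    using assms(2,3) ab by (simp add: xs_def u_def ell_list_append same_on algebra_simps)
  then have "even (ell_list xs I') \<longleftrightarrow> even (ell_list xs I)"
    by presburger
  then have sign: "(-1 :: 'r) ^ ell_list xs I' = (-1) ^ ell_list xs I"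
    by (simp add: minus_one_power_iff)
  have "card I' = card I + 2"
    using assms(2-4) ab(1) by (simp add: I'_def)
  moreover have "card I \<noteq> 0"
    using assms(5) by (metis even_zero)
  ultimately have "(card I' - 1) div 2 = Suc ((card I - 1) div 2)"
    by simp
  moreover have "filter (\<lambda>x. x \<notin> I') xs = u @ v" "filter (\<lambda>x. x \<notin> I') ys = u @ v"
    using ab \<open>a \<in> I'\<close> \<open>b \<in> I'\<close> by (simp_all add: xs_def ys_def u_def v_def same_on)
  moreover have "filter (\<lambda>x. x \<notin> I) xs = u @ [a, b] @ v" "filter (\<lambda>x. x \<notin> I) ys = u @ [b, a] @ v"
    using assms(2,3) by (simp_all add: xs_def ys_def u_def v_def)
  ultimately show ?thesis
    by (intro ext) (simp add: tau_term_def ncsmult_def ell_ys sign algebra_simps)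
qed

lemma tau_term_pair_in_nc_ideal:
  assumes "distinct (us @ a # b # vs)" "set (us @ a # b # vs) \<subseteq> S" "anticomm_rel q a b \<in> G"
    and "I \<subseteq> set (us @ a # b # vs) - {a, b}" "odd (card I)"
  defines "xs \<equiv> us @ a # b # vs" and "ys \<equiv> us @ b # a # vs"
    and "I' \<equiv> insert a (insert b I)"
  shows "(tau_term q xs I + tau_term q ys I) + (tau_term q xs I' + tau_term q ys I') \<in> nc_ideal S G"
proof -
  have "a \<notin> I" "b \<notin> I" "finite I"
    using assms(4) finite_subset by auto
  then have "(tau_term q xs I + tau_term q ys I) + (tau_term q xs I' + tau_term q ys I')
    = ncsmult ((-1) ^ ell_list xs I * (- q) ^ ((card I - 1) div 2))
        (ncmono (filter (\<lambda>x. x \<notin> I) us @ [a, b] @ filter (\<lambda>x. x \<notin> I) vs)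
         + ncmono (filter (\<lambda>x. x \<notin> I) us @ [b, a] @ filter (\<lambda>x. x \<notin> I) vs)
         - ncsmult (2 * q) (ncmono (filter (\<lambda>x. x \<notin> I) us @ filter (\<lambda>x. x \<notin> I) vs)))"
    unfolding xs_def ys_def I'_def by (rule tau_term_swap_pair[OF assms(1) _ _ _ assms(5)])
  also have "\<dots> \<in> nc_ideal S G"
    using assms(2,3) by (intro nc_ideal_ncsmult anticomm_rel_sandwich_in_nc_ideal) auto
  finally show ?thesis .
qed

lemma sum_odd_subsets_pair:
  fixes f :: "'a set \<Rightarrow> 'b::comm_monoid_add"
  assumes "finite X" "a \<in> X" "b \<in> X" "a \<noteq> b"
  shows "(\<Sum>I | I \<subseteq> X \<and> odd (card I). f I)
    = (\<Sum>I | I \<subseteq> X - {a, b} \<and> odd (card I). f I + f (insert a (insert b I)))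
      + (\<Sum>I | I \<subseteq> X \<and> odd (card I) \<and> (a \<in> I \<longleftrightarrow> b \<notin> I). f I)"
proof -
  define N where "N = {I. I \<subseteq> X - {a, b} \<and> odd (card I)}"
  define E where "E = {I. I \<subseteq> X \<and> odd (card I) \<and> (a \<in> I \<longleftrightarrow> b \<notin> I)}"
  define ins where "ins I = insert a (insert b I)" for I
  have "N \<subseteq> Pow X" "E \<subseteq> Pow X"
    by (auto simp: N_def E_def)
  then have fin: "finite N" "finite E"
    using assms(1) finite_subset by blast+
  have card_ins: "card (ins I) = card I + 2" if "I \<in> N" for I
  proof -
    have "finite I" "a \<notin> I" "b \<notin> I"
      using that assms(1) finite_subset[of I X] by (auto simp: N_def)
    then show ?thesis
      using assms(4) by (simp add: ins_def)
  qed
  have inj: "inj_on ins N"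
    by (rule inj_on_inverseI[of _ "\<lambda>I. I - {a, b}"]) (auto simp: N_def ins_def)
  have "{I. I \<subseteq> X \<and> odd (card I)} \<subseteq> (N \<union> ins ` N) \<union> E"
  proof
    fix I assume I: "I \<in> {I. I \<subseteq> X \<and> odd (card I)}"
    show "I \<in> (N \<union> ins ` N) \<union> E"
    proof (cases "a \<in> I \<and> b \<in> I")
      case True
      have "finite I"
        using I assms(1) finite_subset by blast
      moreover have "card {a, b} \<le> card I"
        using True by (intro card_mono \<open>finite I\<close>) auto
      ultimately have "card (I - {a, b}) + 2 = card I"
        using True assms(4) by (simp add: card_Diff_subset)
      then have "I - {a, b} \<in> N"
        using I by (auto simp: N_def) presburger
      moreover have "I = ins (I - {a, b})"
        using True by (auto simp: ins_def)
      ultimately show ?thesis by blast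
    next
      case False
      then show ?thesis
        using I by (auto simp: N_def E_def)
    qed
  qed
  moreover have "ins ` N \<subseteq> {I. I \<subseteq> X \<and> odd (card I)}"
  proof
    fix I' assume "I' \<in> ins ` N"
    then obtain I where "I \<in> N" "I' = ins I"
      by blast
    then show "I' \<in> {I. I \<subseteq> X \<and> odd (card I)}"
      using card_ins[OF \<open>I \<in> N\<close>] assms(2,3) by (auto simp: N_def ins_def)
  qed
  moreover have "N \<union> E \<subseteq> {I. I \<subseteq> X \<and> odd (card I)}"
    by (auto simp: N_def E_def)
  ultimately have decomp: "{I. I \<subseteq> X \<and> odd (card I)} = (N \<union> ins ` N) \<union> E"
    by blast
  have "N \<inter> ins ` N = {}" "(N \<union> ins ` N) \<inter> E = {}"
    by (auto simp: N_def E_def ins_def)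
  then have "(\<Sum>I | I \<subseteq> X \<and> odd (card I). f I) = sum f N + sum f (ins ` N) + sum f E"
    unfolding decomp using fin by (simp add: sum.union_disjoint)
  also have "\<dots> = (\<Sum>I\<in>N. f I + f (ins I)) + sum f E"
    using inj by (simp add: sum.reindex sum.distrib)
  finally show ?thesis
    by (simp add: N_def E_def ins_def)
qed

lemma tau_list_swap_add_in_nc_ideal:
  assumes "distinct (us @ a # b # vs)" "set (us @ a # b # vs) \<subseteq> S" "anticomm_rel q a b \<in> G"
  shows "tau_list q (us @ a # b # vs) + tau_list q (us @ b # a # vs) \<in> nc_ideal S G"
proof -
  define xs where "xs = us @ a # b # vs"
  define ys where "ys = us @ b # a # vs"
  define F where "F I = tau_term q xs I + tau_term q ys I" for I
  define ins where "ins I = insert a (insert b I)" for I :: "'a set"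
  have "a \<noteq> b"
    using assms(1) by simp
  have "tau_list q xs + tau_list q ys = (\<Sum>I | I \<subseteq> set xs \<and> odd (card I). F I)"
    by (simp add: tau_list_def F_def sum.distrib xs_def ys_def insert_commute)
  also have "\<dots> = (\<Sum>I | I \<subseteq> set xs - {a, b} \<and> odd (card I). F I + F (ins I))
      + (\<Sum>I | I \<subseteq> set xs \<and> odd (card I) \<and> (a \<in> I \<longleftrightarrow> b \<notin> I). F I)"
    unfolding ins_def using \<open>a \<noteq> b\<close> by (intro sum_odd_subsets_pair) (auto simp: xs_def)
  also have "(\<Sum>I | I \<subseteq> set xs \<and> odd (card I) \<and> (a \<in> I \<longleftrightarrow> b \<notin> I). F I) = 0"
  proof (intro sum.neutral ballI)
    fix I assume "I \<in> {I. I \<subseteq> set xs \<and> odd (card I) \<and> (a \<in> I \<longleftrightarrow> b \<notin> I)}"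
    then have "tau_term q ys I = - tau_term q xs I"
      unfolding xs_def ys_def by (intro tau_term_swap_one_side) simp
    then show "F I = 0"
      by (simp add: F_def)
  qed
  finally have sum_eq: "tau_list q xs + tau_list q ys
      = (\<Sum>I | I \<subseteq> set xs - {a, b} \<and> odd (card I). F I + F (ins I))"
    by (simp only: add_0_right)
  have "F I + F (ins I) \<in> nc_ideal S G" if "I \<subseteq> set xs - {a, b}" "odd (card I)" for I
    unfolding F_def ins_def xs_def ys_def
    using that assms by (intro tau_term_pair_in_nc_ideal) (auto simp: xs_def)
  then have "(\<Sum>I | I \<subseteq> set xs - {a, b} \<and> odd (card I). F I + F (ins I)) \<in> nc_ideal S G"
    by (intro nc_ideal_sum) auto
  then show ?thesis
    using sum_eq by (simp add: xs_def ys_def)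
qed

lemma tau_list_swap_in_nc_ideal_iff:
  assumes "distinct (us @ a # b # vs)" "set (us @ a # b # vs) \<subseteq> S" "anticomm_rel q a b \<in> G"
  shows "tau_list q (us @ b # a # vs) \<in> nc_ideal S G \<longleftrightarrow> tau_list q (us @ a # b # vs) \<in> nc_ideal S G"
  using nc_ideal_add_iff[OF tau_list_swap_add_in_nc_ideal[OF assms]] by blast

subsection \<open>Independence of the order\<close>

lemma adjacent_swap_invariant_on_permutations:
  assumes swap: "\<And>us a b vs. distinct (us @ a # b # vs) \<Longrightarrow> set (us @ a # b # vs) \<subseteq> A \<Longrightarrow>
      P (us @ b # a # vs) \<longleftrightarrow> P (us @ a # b # vs)"
    and "distinct xs" "distinct ys" "set xs = set ys" "set ys \<subseteq> A"
  shows "P xs \<longleftrightarrow> P ys"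
proof -
  have bubble: "P (us @ x # ws @ vs) \<longleftrightarrow> P (us @ ws @ x # vs)"
    if "distinct (us @ ws @ x # vs)" "set (us @ ws @ x # vs) \<subseteq> A" for us ws x vs
    using that
  proof (induction ws arbitrary: us)
    case (Cons w ws)
    have "P (us @ x # w # ws @ vs) \<longleftrightarrow> P (us @ w # x # ws @ vs)"
      using Cons.prems by (intro swap) auto
    also have "\<dots> \<longleftrightarrow> P ((us @ [w]) @ ws @ x # vs)"
      using Cons by (simp add: Cons.IH[of "us @ [w]", simplified])
    finally show ?case by simp
  qed simp
  have "P (us @ xs) \<longleftrightarrow> P (us @ ys)"
    if "distinct (us @ ys)" "distinct xs" "set xs = set ys" "set (us @ ys) \<subseteq> A" for us
    using that
  proof (induction ys arbitrary: us xs)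
    case (Cons y ys)
    obtain ws1 ws2 where xs: "xs = ws1 @ y # ws2"
      using Cons.prems(3) split_list[of y xs] by auto
    have "distinct (us @ ws1 @ y # ws2)" "set (us @ ws1 @ y # ws2) \<subseteq> A"
      using Cons.prems xs by auto
    then have "P (us @ xs) \<longleftrightarrow> P (us @ y # ws1 @ ws2)"
      using bubble xs by simp
    also have "\<dots> \<longleftrightarrow> P ((us @ [y]) @ ys)"
    proof -
      have "distinct ((us @ [y]) @ ys)" "distinct (ws1 @ ws2)" "set (ws1 @ ws2) = set ys"
        "set ((us @ [y]) @ ys) \<subseteq> A"
        using Cons.prems xs by auto
      from Cons.IH[OF this] show ?thesis
        by simp
    qed
    finally show ?case by simp
  qed simp
  from this[of "[]"] show ?thesis
    using assms by simp
qed

lemma tau_list_in_nc_ideal_iff: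
  assumes "\<And>a b. a \<in> S \<Longrightarrow> b \<in> S \<Longrightarrow> a \<noteq> b \<Longrightarrow> anticomm_rel q a b \<in> G"
    and "distinct xs" "distinct ys" "set xs = set ys" "set ys \<subseteq> S"
  shows "tau_list q xs \<in> nc_ideal S G \<longleftrightarrow> tau_list q ys \<in> nc_ideal S G"
proof (rule adjacent_swap_invariant_on_permutations[where A = S, OF _ assms(2-5)])
  fix us a b vs assume "distinct (us @ a # b # vs)" "set (us @ a # b # vs) \<subseteq> S"
  then show "tau_list q (us @ b # a # vs) \<in> nc_ideal S G \<longleftrightarrow> tau_list q (us @ a # b # vs) \<in> nc_ideal S G"
    using assms(1) by (intro tau_list_swap_in_nc_ideal_iff) auto
qed

lemma anticomm_rel_in_Iq_gens:
  assumes "linear_order_on S ord" "r \<in> S" "s \<in> S" "r \<noteq> s"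
  shows "anticomm_rel q r s \<in> Iq_gens S ord q M"
  using ord_less_total[OF assms]
proof
  assume "ord_less ord s r"
  then show ?thesis
    using assms by (auto simp: Iq_gens_def)
next
  assume "ord_less ord r s"
  then have "anticomm_rel q s r \<in> Iq_gens S ord q M"
    using assms by (auto simp: Iq_gens_def)
  then show ?thesis
    by (simp add: add.commute)
qed

lemma Iq_gens_subset_Iq:
  assumes "finite S" "M \<subseteq> Pow S" "linear_order_on S ord1" "linear_order_on S ord2"
  shows "Iq_gens S ord1 q M \<subseteq> Iq S ord2 q M"
proof
  fix g assume "g \<in> Iq_gens S ord1 q M"
  then consider (square) s where "s \<in> S" "g = ncmono [s, s] - ncconst q"
    | (anticomm) r s where "r \<in> S" "s \<in> S" "ord_less ord1 s r" "g = anticomm_rel q r s"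
    | (tau) J where "J \<in> M" "g = tau_minus ord1 q J"
    unfolding Iq_gens_def by blast
  then show "g \<in> Iq S ord2 q M"
  proof cases
    case square
    then show ?thesis
      unfolding Iq_def by (intro nc_ideal.gen) (auto simp: Iq_gens_def)
  next
    case anticomm
    then show ?thesis
      using anticomm_rel_in_Iq_gens[OF assms(4), of r s q M]
      unfolding Iq_def by (auto simp: ord_less_def intro: nc_ideal.gen)
  next
    case tau
    then have "J \<subseteq> S"
      using assms(2) by auto
    then have J: "finite J" "J \<subseteq> S"
      using assms(1) finite_subset by auto
    have "tau_minus ord2 q J \<in> Iq S ord2 q M"
      using tau unfolding Iq_def by (intro nc_ideal.gen) (auto simp: Iq_gens_def)
    then have "tau_list q (ordlist ord2 J) \<in> Iq S ord2 q M"
      by (simp add: tau_minus_eq_tau_list[OF assms(4) J])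
    then show ?thesis
      unfolding tau(2) tau_minus_eq_tau_list[OF assms(3) J] Iq_def
      using set_sorted_distinct_ordlist[OF assms(3) J] set_sorted_distinct_ordlist[OF assms(4) J]
        J(2)
      by (subst tau_list_in_nc_ideal_iff[where ys = "ordlist ord2 J"])
        (auto intro: nc_ideal.gen anticomm_rel_in_Iq_gens[OF assms(4)])
  qed
qed

theorem proposition4p1:
  fixes S :: "'s set" and q :: "'r::comm_ring_1" and M :: "'s set set"
    and ord1 ord2 :: "('s \<times> 's) set"
  assumes "finite S"
    and "M \<subseteq> Pow S"
    and "linear_order_on S ord1"
    and "linear_order_on S ord2"
  shows "Iq S ord1 q M = Iq S ord2 q M"
proof -
  have "Iq S ord1 q M \<subseteq> Iq S ord2 q M" "Iq S ord2 q M \<subseteq> Iq S ord1 q M"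
    using Iq_gens_subset_Iq[OF assms, of q] Iq_gens_subset_Iq[OF assms(1,2,4,3), of q]
    unfolding Iq_def by (simp_all add: nc_ideal_subset)
  then show ?thesis by (rule equalityI)
qed

end
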